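(* Consider $n$ processes running the Median-based Byzantine Agreement algorithm (described in the context) with any parameter $\alpha$ satisfying $0 \le \alpha < \lceil n/6 \rceil - 1$, in a system in which fewer than $\lfloor n/3 \rfloor$ processes are Byzantine. Then the algorithm satisfies consistency: all non-faulty processes output the same value.
   Context: System model: $n$ processes $p_1,\dots,p_n$ communicate over a complete network in fully synchronous rounds (every message sent in a round is delivered before the next round); the receiver of a message knows its sender. A Byzantine (faulty) process may deviate arbitrarily from the protocol, e.g. send different messages to different processes or omit messages; the other processes are non-faulty. Each process $p_i$ has an input value $v_i$ from a totally ordered domain $V$ (integers); $\bot \notin V$ is a special default value. WeakMVBA: a Byzantine agreement protocol (tolerating the given number of Byzantine processes) in which each process has an input and all non-faulty processes terminate with: (consistency) the same decision value; (weak validity) if all non-faulty processes have the same input $v$, the decision is $v$; otherwise the decision is some value of $V\cup\{\bot\}$. Median-based Byzantine Agreement algorithm with parameter $\alpha$, run by a process with input $v$: (1) send $v$ to all processes (including itself); initialize an array $A[1..n]$ to $\bot$ and set $A[i]$ to the value received from $p_i$. (2) For each $i=1,\dots,n$, in parallel, run an instance of WeakMVBA in which this process uses input $A[i]$, and replace $A[i]$ by the decision of that instance. (3) Output select\_value$(A)$, defined as: delete all $\bot$ entries of $A$ to obtain a list $A_{\not\bot}$ of length $k$; let $C[u]$ be the number of occurrences of $u$ in $A_{\not\bot}$ and let $m$ be a value maximizing $C[m]$ (ties broken by a fixed deterministic rule); if $C[m] \ge \lfloor k/3\rfloor + 1 + \alpha$, output $m$; otherwise sort $A_{\not\bot}$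 in nondecreasing order and output its median element (the entry at position $\lfloor k/2 \rfloor$; for even $k$ the lower of the two middle values). *)

theory Defs
  imports Complex_Main
begin

text \<open>Values: V = int; the default value bot is modelled by None, so entries of the
  array A have type int option. Processes are indexed 0 ..< n.\<close>

definition is_tiebreak :: "(int list \<Rightarrow> int) \<Rightarrow> bool" where
  "is_tiebreak tb \<longleftrightarrow>
     (\<forall>L. L \<noteq> [] \<longrightarrow> (\<forall>u. count_list L u \<le> count_list L (tb L)))"

text \<open>The median of a
  sorted list of length k is the element at 0-based position (k-1) div 2, i.e. the middle
  element for odd k and the lower of the two middle elements for even k.\<close>
definition select_value :: "nat \<Rightarrow> (int list \<Rightarrow> int) \<Rightarrow> int option list \<Rightarrow> int" where
  "select_value \<alpha> tb A =
     (let L = [x. Some x \<leftarrow> A]; k = length L; m = tb L in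
      if count_list L m \<ge> k div 3 + 1 + \<alpha> then m
      else sort L ! ((k - 1) div 2))"

definition weak_mvba ::
  "nat \<Rightarrow> nat set \<Rightarrow> (nat \<Rightarrow> int option) \<Rightarrow> (nat \<Rightarrow> int option) \<Rightarrow> bool" where
  "weak_mvba n F inp dec \<longleftrightarrow>
     (\<forall>i<n. \<forall>i'<n. i \<notin> F \<longrightarrow> i' \<notin> F \<longrightarrow> dec i = dec i') \<and>
     (\<forall>x. (\<forall>i<n. i \<notin> F \<longrightarrow> inp i = Some x) \<longrightarrow> (\<forall>i<n. i \<notin> F \<longrightarrow> dec i = Some x))"

text \<open>Output of a process whose array after step (2) is dec (dec j = decision of instance j).\<close>
definition mba_output :: "nat \<Rightarrow> (int list \<Rightarrow> int) \<Rightarrow> nat \<Rightarrow> (nat \<Rightarrow> int option) \<Rightarrow> int" where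
  "mba_output \<alpha> tb n dec = select_value \<alpha> tb (map dec [0..<n])"

end

theory Submission
  imports Defs
begin

lemma weak_mvba_consistent:
  assumes "weak_mvba n F inp dec" and "i < n" and "i' < n" and "i \<notin> F" and "i' \<notin> F"
  shows "dec i = dec i'"
  using assms unfolding weak_mvba_def by blast

lemma mba_output_cong:
  assumes "\<And>j. j < n \<Longrightarrow> dec j = dec' j"
  shows "mba_output \<alpha> tb n dec = mba_output \<alpha> tb n dec'"
proof -
  have "map dec [0..<n] = map dec' [0..<n]"
    using assms by (intro map_cong) auto
  then show ?thesis
    unfolding mba_output_def by (rule arg_cong)
qed

text \<open>The bounds on the
  faulty set and on \<open>\<alpha>\<close> are not used here.\<close>

theorem lemma1:
  fixes n \<alpha> :: nat and F :: "nat set" and v :: "nat \<Rightarrow> int"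
    and recv :: "nat \<Rightarrow> nat \<Rightarrow> int option" and dec :: "nat \<Rightarrow> nat \<Rightarrow> int option"
    and tb :: "int list \<Rightarrow> int"
  assumes faulty: "F \<subseteq> {..<n}" and few: "card F < n div 3"
    and alpha: "int \<alpha> < ceiling (real n / 6) - 1"
    and tie: "is_tiebreak tb"
    and step1: "\<forall>i<n. \<forall>j<n. i \<notin> F \<longrightarrow> j \<notin> F \<longrightarrow> recv i j = Some (v j)"
    and step2: "\<forall>j<n. weak_mvba n F (\<lambda>i. recv i j) (\<lambda>i. dec i j)"
  shows "\<forall>i<n. \<forall>i'<n. i \<notin> F \<longrightarrow> i' \<notin> F \<longrightarrow>
           mba_output \<alpha> tb n (dec i) = mba_output \<alpha> tb n (dec i')"
proof (intro allI impI)
  fix i i' assume "i < n" "i' < n" "i \<notin> F" "i' \<notin> F"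
  then have "dec i j = dec i' j" if "j < n" for j
    using step2 that weak_mvba_consistent by blast
  then show "mba_output \<alpha> tb n (dec i) = mba_output \<alpha> tb n (dec i')"
    by (rule mba_output_cong)
qed

end
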